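(* Let $\mathbb{X},\mathbb{Y}$ be Banach spaces, $\varphi:\mathbb{X}\to\mathbb{Y}$ a mapping and $\bar x\in\mathbb{X}$. Suppose that $\varphi$ is Fréchet differentiable at $\bar x$, with derivative $\nabla\varphi(\bar x)$, and that there exist $\kappa,r>0$ such that $$\mathbf{d}(\bar x,\varphi^{-1}(y))\le \kappa\,\|\varphi(\bar x)-y\|\quad\text{for all } y\in\mathbb{Y}\text{ with }\|y-\varphi(\bar x)\|<r.$$ Then $\nabla\varphi(\bar x)(\mathbb{X})$ is a closed linear subspace of $\mathbb{Y}$.
   Context: For a subset $D$ of a normed space, $\mathbf{d}(x,D):=\inf\{\|x-y\|:y\in D\}$ (with $\inf\emptyset=+\infty$), and $\varphi^{-1}(y):=\{x\in\mathbb{X}:\varphi(x)=y\}$. *)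

theory Defs
  imports "HOL-Analysis.Analysis"
begin

text \<open>Distance from a point to a set, with the convention inf of the empty set = +infinity
  (hence extended-real valued).\<close>
definition dist_set :: "'a::real_normed_vector \<Rightarrow> 'a set \<Rightarrow> ereal" where
  "dist_set x D = (INF y\<in>D. ereal (norm (x - y)))"

end

theory Submission
  imports Defs
begin

text \<open>Metric regularity at \<open>xbar\<close> lets us solve \<open>\<phi> z = \<phi> xbar + t y\<close> with \<open>z\<close> close to
  \<open>xbar\<close>; for small \<open>t\<close> the first-order expansion of \<open>\<phi>\<close> turns this into an approximate
  solution of \<open>D x = y\<close> with \<open>\<parallel>x\<parallel> \<le> 2\<kappa>\<parallel>y\<parallel>\<close> and error at most \<open>\<parallel>y\<parallel>/2\<close>. Correcting the
  residual again and again (Banach's successive approximation) produces a convergent series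
  whose image under \<open>D\<close> is \<open>y\<close>. Hence \<open>D\<close> is onto, and its range is trivially a closed
  subspace.\<close>

lemma dist_set_lessE:
  assumes "dist_set x A < ereal c"
  obtains y where "y \<in> A" "norm (x - y) < c"
  using assms unfolding dist_set_def INF_less_iff by auto

lemma bounded_linear_surj_if_approx_surj:
  fixes D :: "'a::banach \<Rightarrow> 'b::real_normed_vector"
  assumes "bounded_linear D" and q: "0 \<le> q" "q < 1"
    and approx: "\<And>y. \<exists>x. norm x \<le> C * norm y \<and> norm (y - D x) \<le> q * norm y"
  shows "surj D"
proof -
  interpret D: bounded_linear D by fact
  obtain g where g: "\<And>y. norm (g y) \<le> C * norm y" "\<And>y. norm (y - D (g y)) \<le> q * norm y"
    using approx by metis
  have "y \<in> range D" for y
  proof -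
    define res where "res n = ((\<lambda>u. u - D (g u)) ^^ n) y" for n
    have res_Suc: "res (Suc n) = res n - D (g (res n))" for n
      by (simp add: res_def)
    have res_bound: "norm (res n) \<le> q ^ n * norm y" for n
    proof (induction n)
      case (Suc n)
      have "norm (res (Suc n)) \<le> q * norm (res n)"
        using g(2) by (simp add: res_Suc)
      also have "\<dots> \<le> q * (q ^ n * norm y)"
        using Suc q by (intro mult_left_mono) auto
      finally show ?case by simp
    qed (simp add: res_def)
    define x where "x n = g (res n)" for n
    have "norm (x n) \<le> \<bar>C\<bar> * norm (res n)" for n
      using g(1)[of "res n"] abs_ge_self[of C] mult_right_mono norm_ge_zero
      unfolding x_def by (meson order_trans)
    then have "norm (x n) \<le> \<bar>C\<bar> * norm y * q ^ n" for n
      using mult_left_mono[OF res_bound abs_ge_zero] order_trans by (simp add: algebra_simps) blast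
    then have "summable x"
      using q by (intro summable_comparison_test[OF _ summable_mult[OF summable_geometric]]) auto
    have partial_sums: "(\<Sum>k<n. D (x k)) = y - res n" for n
      by (induction n) (simp_all add: res_def x_def res_Suc[unfolded res_def])
    have "res \<longlonglongrightarrow> 0"
    proof (rule tendsto_norm_zero_cancel,
        rule tendsto_sandwich[of "\<lambda>_. 0" _ _ "\<lambda>n. q ^ n * norm y"])
      show "(\<lambda>n. q ^ n * norm y) \<longlonglongrightarrow> 0"
        using q by (intro tendsto_mult_left_zero LIMSEQ_power_zero) auto
    qed (use res_bound in auto)
    then have "(\<lambda>k. D (x k)) sums y"
      unfolding sums_def partial_sums using tendsto_diff[OF tendsto_const, of res 0] by simp
    moreover have "(\<lambda>k. D (x k)) sums D (suminf x)"
      using D.sums[OF summable_sums] \<open>summable x\<close> by blast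
    ultimately show ?thesis
      using sums_unique2 by (metis rangeI)
  qed
  then show ?thesis by auto
qed

lemma metric_regular_derivative_approx_surj:
  fixes \<phi> :: "'a::real_normed_vector \<Rightarrow> 'b::real_normed_vector"
  assumes deriv: "(\<phi> has_derivative D) (at xbar)"
    and rpos: "r > 0" and c: "c > \<kappa>" "\<kappa> \<ge> 0" and e: "e > 0"
    and reg: "\<And>y. norm (y - \<phi> xbar) < r \<Longrightarrow>
               dist_set xbar (\<phi> -` {y}) \<le> ereal (\<kappa> * norm (\<phi> xbar - y))"
  shows "\<exists>x. norm x \<le> c * norm y \<and> norm (y - D x) \<le> e * norm y"
proof (cases "y = 0")
  case True
  with deriv show ?thesis
    by (intro exI[of _ 0]) (simp add: has_derivative_bounded_linear linear_simps)
next
  case False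
  then have ny: "norm y > 0" by simp
  have cpos: "c > 0" using c by simp
  interpret D: bounded_linear D using deriv by (rule has_derivative_bounded_linear)
  obtain d where d: "d > 0" and expansion: "\<And>z. norm (z - xbar) < d \<Longrightarrow>
      norm (\<phi> z - \<phi> xbar - D (z - xbar)) \<le> e / c * norm (z - xbar)"
    using deriv e cpos unfolding has_derivative_at_alt by (meson divide_pos_pos)
  define t where "t = min (r / 2) (d / (2 * c)) / norm y"
  have "min (r / 2) (d / (2 * c)) > 0" "min (r / 2) (d / (2 * c)) < r"
    "c * min (r / 2) (d / (2 * c)) < d"
    using rpos d cpos by (auto simp: min_def field_simps)
  then have t: "t > 0" "t * norm y < r" "c * t * norm y < d"
    using ny by (simp_all add: t_def)
  define w where "w = \<phi> xbar + t *\<^sub>R y"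
  have "dist_set xbar (\<phi> -` {w}) \<le> ereal (\<kappa> * (t * norm y))"
    using reg[of w] t by (simp add: w_def)
  also have "\<dots> < ereal (c * t * norm y)"
    using c t ny by simp
  finally obtain z where z: "\<phi> z = w" and zn: "norm (z - xbar) < c * t * norm y"
    by (rule dist_set_lessE) (simp add: norm_minus_commute)
  have "norm (t *\<^sub>R y - D (z - xbar)) = norm (\<phi> z - \<phi> xbar - D (z - xbar))"
    using z by (simp add: w_def)
  also have "\<dots> \<le> e / c * norm (z - xbar)"
    using expansion zn t by auto
  also have "\<dots> \<le> e / c * (c * t * norm y)"
    using zn e cpos by (intro mult_left_mono) auto
  finally have err: "norm (t *\<^sub>R y - D (z - xbar)) \<le> e * (t * norm y)"
    using cpos by simp
  define x where "x = (1 / t) *\<^sub>R (z - xbar)"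
  have "y - D x = (1 / t) *\<^sub>R (t *\<^sub>R y - D (z - xbar))"
    using t by (simp add: x_def D.scaleR[symmetric] scaleR_diff_right)
  then have "norm (y - D x) = norm (t *\<^sub>R y - D (z - xbar)) / t"
    using t by simp
  also have "\<dots> \<le> e * norm y"
    using err t by (simp add: pos_divide_le_eq algebra_simps)
  finally have approx: "norm (y - D x) \<le> e * norm y" .
  have "norm x = norm (z - xbar) / t"
    using t by (simp add: x_def)
  also have "\<dots> \<le> c * norm y"
    using zn t by (simp add: pos_divide_le_eq algebra_simps)
  finally have "norm x \<le> c * norm y" .
  with approx show ?thesis by blast
qed

theorem proposition3p1:
  fixes \<phi> :: "'a::banach \<Rightarrow> 'b::banach"
    and D :: "'a \<Rightarrow> 'b"
    and xbar :: 'a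
    and \<kappa> r :: real
  assumes deriv: "(\<phi> has_derivative D) (at xbar)"
    and kpos: "\<kappa> > 0" and rpos: "r > 0"
    and reg: "\<And>y. norm (y - \<phi> xbar) < r \<Longrightarrow>
               dist_set xbar (\<phi> -` {y}) \<le> ereal (\<kappa> * norm (\<phi> xbar - y))"
  shows "subspace (range D) \<and> closed (range D)"
proof -
  have "\<exists>x. norm x \<le> 2 * \<kappa> * norm y \<and> norm (y - D x) \<le> 1 / 2 * norm y" for y
    using kpos by (intro metric_regular_derivative_approx_surj[OF deriv rpos _ _ _ reg]) auto
  then have "surj D"
    using has_derivative_bounded_linear[OF deriv]
    by (intro bounded_linear_surj_if_approx_surj[where q = "1/2"]) auto
  then show ?thesis
    by (simp add: subspace_UNIV)
qed

end
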